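(* Let $R$ be a commutative semiring and $v:R\to M$ a surjective m-valuation with support $\mathfrak q$. Let $U(v):=\widehat{U^0(v)}$ and $\varphi_v:=\sigma_{U^0(v)}\circ\varphi_v^0:R\to U(v)$. Then $\varphi_v$ is a supervaluation covering $v$ and is an initial cover of $v$: for any supervaluation $\psi:R\to V$ covering $v$, there exists a unique semiring homomorphism $\alpha:U(v)\to V$ over $M$ with $\psi=\alpha\circ\varphi_v$.
   Context: A bipotent semiring $M$: commutative monoid with absorbing $0$, total order compatible with multiplication, $0$ least, $x+y=\max(x,y)$. m-valuation: multiplicative $v:R\to M$ with $v(0)=0$, $v(1)=1$, $v(a+b)\le\max(v(a),v(b))$. A supertropical monoid is a commutative monoid $U$ with absorbing $0$, idempotent $e$ with $ex=0\Rightarrow x=0$, and a total order on $eU$ making it a bipotent semiring; it is a (supertropical) semiring if the addition $x+y:=y$ ($ex<ey$), $x$ ($ex>ey$), $ex$ ($ex=ey$) is associative and distributive. An m-supervaluation is $\varphi:R\to U$ with $\varphi(0)=0$, $\varphi(1)=1$, multiplicative, $e\varphi(a+b)\le\max(e\varphi(a),e\varphi(b))$; a supervaluation is an m-supervaluation whose target is a supertropical semiring; it covers $v$ if $eU=M$ and $e\varphi=v$. "Over $M$" means restricting to the identity on $M$. $U^0(v)$: the set $(R\setminus\mathfrak q)\sqcup M$ with product $xy$ if $x,y,xy\in R\setminus\mathfrak q$; $0_M$ if $x,y\in R\setminus\mathfrak q$, $xy\in\mathfrak q$; $v(x)y$ if $x\in R\setminus\mathfrak q$, $y\in M$ (and symmetrically);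 the $M$-product on $M$; $e=1_M$, order of $M$ on $eU^0(v)=M$. $\varphi_v^0(a)=a$ for $a\notin\mathfrak q$, $0_M$ for $a\in\mathfrak q$. For a supertropical monoid $U$ with $M=eU$: $D(U):=M\cup\{yz:y,z\in U,\exists y'\in M,\ y'<ey,\ y'z=eyz\}$; $\hat U:=U/E$ where $x\sim_E y$ iff $x=y$ or ($x,y\in D(U)$ and $ex=ey$), with the induced supertropical monoid structure (multiplication and $e$ induced, ghost ideal identified with $M$); $\sigma_U:U\to\hat U$ the projection. *)

theory Defs
  imports Main
begin

text \<open>The bipotent semiring M is a type 'm: commutative monoid (comm_monoid_mult) with
  a zero, a total order (linorder); addition is max and is therefore not a separate
  operation.\<close>

definition bipotent_semiring :: "'m::{linorder, comm_monoid_mult, zero} itself \<Rightarrow> bool" where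
  "bipotent_semiring _ \<longleftrightarrow>
     (\<forall>x::'m. 0 * x = 0) \<and> (\<forall>x::'m. 0 \<le> x) \<and>
     (\<forall>x y z::'m. x \<le> y \<longrightarrow> x * z \<le> y * z)"

definition m_valuation :: "('r::comm_semiring_1 \<Rightarrow> 'm::{linorder, comm_monoid_mult, zero}) \<Rightarrow> bool" where
  "m_valuation v \<longleftrightarrow> v 0 = 0 \<and> v 1 = 1 \<and> (\<forall>a b. v (a * b) = v a * v b) \<and>
     (\<forall>a b. v (a + b) \<le> max (v a) (v b))"

definition supp :: "('r::comm_semiring_1 \<Rightarrow> 'm::zero) \<Rightarrow> 'r set" where
  "supp v = {a. v a = 0}"

record 'a stm =
  carr :: "'a set"
  smul :: "'a \<Rightarrow> 'a \<Rightarrow> 'a"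
  sone :: 'a
  szero :: 'a
  sghost :: 'a
  sle :: "'a \<Rightarrow> 'a \<Rightarrow> bool"

definition ghosts :: "'a stm \<Rightarrow> 'a set" where
  "ghosts U = {smul U (sghost U) x | x. x \<in> carr U}"

definition supertropical_monoid :: "'a stm \<Rightarrow> bool" where
  "supertropical_monoid U \<longleftrightarrow>
     sone U \<in> carr U \<and> szero U \<in> carr U \<and> sghost U \<in> carr U \<and>
     (\<forall>x\<in>carr U. \<forall>y\<in>carr U. smul U x y \<in> carr U) \<and>
     (\<forall>x\<in>carr U. \<forall>y\<in>carr U. smul U x y = smul U y x) \<and>
     (\<forall>x\<in>carr U. \<forall>y\<in>carr U. \<forall>z\<in>carr U. smul U (smul U x y) z = smul U x (smul U y z)) \<and>
     (\<forall>x\<in>carr U. smul U (sone U) x = x) \<and>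
     (\<forall>x\<in>carr U. smul U (szero U) x = szero U) \<and>
     smul U (sghost U) (sghost U) = sghost U \<and>
     (\<forall>x\<in>carr U. smul U (sghost U) x = szero U \<longrightarrow> x = szero U) \<and>
     \<comment> \<open>total order on eU making it a bipotent semiring\<close>
     (\<forall>x\<in>ghosts U. sle U x x) \<and>
     (\<forall>x\<in>ghosts U. \<forall>y\<in>ghosts U. sle U x y \<and> sle U y x \<longrightarrow> x = y) \<and>
     (\<forall>x\<in>ghosts U. \<forall>y\<in>ghosts U. \<forall>z\<in>ghosts U. sle U x y \<and> sle U y z \<longrightarrow> sle U x z) \<and>
     (\<forall>x\<in>ghosts U. \<forall>y\<in>ghosts U. sle U x y \<or> sle U y x) \<and>
     (\<forall>x\<in>ghosts U. sle U (szero U) x) \<and>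
     (\<forall>x\<in>ghosts U. \<forall>y\<in>ghosts U. \<forall>z\<in>ghosts U. sle U x y \<longrightarrow> sle U (smul U x z) (smul U y z))"

text \<open>The supertropical addition determined by multiplication, e and the order on eU.\<close>
definition sadd :: "'a stm \<Rightarrow> 'a \<Rightarrow> 'a \<Rightarrow> 'a" where
  "sadd U x y =
     (let ex = smul U (sghost U) x; ey = smul U (sghost U) y in
      if ex = ey then ex else if sle U ex ey then y else x)"

definition smax :: "'a stm \<Rightarrow> 'a \<Rightarrow> 'a \<Rightarrow> 'a" where
  "smax U x y = (if sle U x y then y else x)"

definition supertropical_semiring :: "'a stm \<Rightarrow> bool" where
  "supertropical_semiring U \<longleftrightarrow> supertropical_monoid U \<and>
     (\<forall>x\<in>carr U. \<forall>y\<in>carr U. \<forall>z\<in>carr U. sadd U (sadd U x y) z = sadd U x (sadd U y z)) \<and>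
     (\<forall>x\<in>carr U. \<forall>y\<in>carr U. \<forall>z\<in>carr U.
        smul U x (sadd U y z) = sadd U (smul U x y) (smul U x z))"

definition m_supervaluation :: "'a stm \<Rightarrow> ('r::comm_semiring_1 \<Rightarrow> 'a) \<Rightarrow> bool" where
  "m_supervaluation U \<phi> \<longleftrightarrow>
     (\<forall>a. \<phi> a \<in> carr U) \<and> \<phi> 0 = szero U \<and> \<phi> 1 = sone U \<and>
     (\<forall>a b. \<phi> (a * b) = smul U (\<phi> a) (\<phi> b)) \<and>
     (\<forall>a b. sle U (smul U (sghost U) (\<phi> (a + b)))
                   (smax U (smul U (sghost U) (\<phi> a)) (smul U (sghost U) (\<phi> b))))"

definition supervaluation :: "'a stm \<Rightarrow> ('r::comm_semiring_1 \<Rightarrow> 'a) \<Rightarrow> bool" where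
  "supervaluation U \<phi> \<longleftrightarrow> supertropical_semiring U \<and> m_supervaluation U \<phi>"

text \<open>Identification of the ghost ideal eU with M: an isomorphism of bipotent semirings
  (monoid isomorphism M \<rightarrow> eU, with unit e, preserving zero and the order).\<close>
definition ghost_ident :: "'a stm \<Rightarrow> ('m::{linorder, comm_monoid_mult, zero} \<Rightarrow> 'a) \<Rightarrow> bool" where
  "ghost_ident U \<iota> \<longleftrightarrow> bij_betw \<iota> UNIV (ghosts U) \<and>
     \<iota> 1 = sghost U \<and> \<iota> 0 = szero U \<and>
     (\<forall>m n. \<iota> (m * n) = smul U (\<iota> m) (\<iota> n)) \<and>
     (\<forall>m n. m \<le> n \<longleftrightarrow> sle U (\<iota> m) (\<iota> n))"

definition covers :: "'a stm \<Rightarrow> ('m::{linorder, comm_monoid_mult, zero} \<Rightarrow> 'a)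
    \<Rightarrow> ('r::comm_semiring_1 \<Rightarrow> 'a) \<Rightarrow> ('r \<Rightarrow> 'm) \<Rightarrow> bool" where
  "covers U \<iota> \<phi> v \<longleftrightarrow> supervaluation U \<phi> \<and> ghost_ident U \<iota> \<and>
     (\<forall>a. smul U (sghost U) (\<phi> a) = \<iota> (v a))"

definition semiring_hom :: "'a stm \<Rightarrow> 'b stm \<Rightarrow> ('a \<Rightarrow> 'b) \<Rightarrow> bool" where
  "semiring_hom U V \<alpha> \<longleftrightarrow>
     (\<forall>x\<in>carr U. \<alpha> x \<in> carr V) \<and> \<alpha> (szero U) = szero V \<and> \<alpha> (sone U) = sone V \<and>
     (\<forall>x\<in>carr U. \<forall>y\<in>carr U. \<alpha> (smul U x y) = smul V (\<alpha> x) (\<alpha> y)) \<and>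
     (\<forall>x\<in>carr U. \<forall>y\<in>carr U. \<alpha> (sadd U x y) = sadd V (\<alpha> x) (\<alpha> y))"

definition over_M :: "('m \<Rightarrow> 'a) \<Rightarrow> ('m \<Rightarrow> 'b) \<Rightarrow> ('a \<Rightarrow> 'b) \<Rightarrow> bool" where
  "over_M \<iota>U \<iota>V \<alpha> \<longleftrightarrow> (\<forall>m. \<alpha> (\<iota>U m) = \<iota>V m)"

definition phi0 :: "('r::comm_semiring_1 \<Rightarrow> 'm::{linorder, comm_monoid_mult, zero}) \<Rightarrow> 'r \<Rightarrow> 'r + 'm" where
  "phi0 v a = (if a \<in> supp v then Inr 0 else Inl a)"

definition u0mul :: "('r::comm_semiring_1 \<Rightarrow> 'm::{linorder, comm_monoid_mult, zero})
    \<Rightarrow> 'r + 'm \<Rightarrow> 'r + 'm \<Rightarrow> 'r + 'm" where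
  "u0mul v x y =
     (case x of
        Inl a \<Rightarrow> (case y of Inl b \<Rightarrow> (if a * b \<in> supp v then Inr 0 else Inl (a * b))
                          | Inr n \<Rightarrow> Inr (v a * n))
      | Inr m \<Rightarrow> (case y of Inl b \<Rightarrow> Inr (m * v b)
                          | Inr n \<Rightarrow> Inr (m * n)))"

definition u0le :: "'r + 'm::linorder \<Rightarrow> 'r + 'm \<Rightarrow> bool" where
  "u0le x y = (case (x, y) of (Inr m, Inr n) \<Rightarrow> m \<le> n | _ \<Rightarrow> False)"

definition U0 :: "('r::comm_semiring_1 \<Rightarrow> 'm::{linorder, comm_monoid_mult, zero}) \<Rightarrow> ('r + 'm) stm" where
  "U0 v = \<lparr> carr = Inl ` (- supp v) \<union> range Inr, smul = u0mul v, sone = phi0 v 1,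
            szero = Inr 0, sghost = Inr 1, sle = u0le \<rparr>"

definition Dset :: "'a stm \<Rightarrow> 'a set" where
  "Dset U = ghosts U \<union>
     {smul U y z | y z. y \<in> carr U \<and> z \<in> carr U \<and>
        (\<exists>y'\<in>ghosts U. sle U y' (smul U (sghost U) y) \<and> y' \<noteq> smul U (sghost U) y \<and>
            smul U y' z = smul U (sghost U) (smul U y z))}"

definition Erel :: "'a stm \<Rightarrow> ('a \<times> 'a) set" where
  "Erel U = {(x, y). x \<in> carr U \<and> y \<in> carr U \<and>
      (x = y \<or> (x \<in> Dset U \<and> y \<in> Dset U \<and> smul U (sghost U) x = smul U (sghost U) y))}"

definition sigma :: "'a stm \<Rightarrow> 'a \<Rightarrow> 'a set" where
  "sigma U x = Erel U `` {x}"

text \<open>Induced structure on U/E; the order on the ghost classes is the order of the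
  unique ghost representative (the ghost ideal of U/E is identified with eU).\<close>
definition hat :: "'a stm \<Rightarrow> 'a set stm" where
  "hat U = \<lparr> carr = carr U // Erel U,
             smul = (\<lambda>A B. Erel U `` {smul U x y | x y. x \<in> A \<and> y \<in> B}),
             sone = sigma U (sone U), szero = sigma U (szero U), sghost = sigma U (sghost U),
             sle = (\<lambda>A B. \<exists>x\<in>A. \<exists>y\<in>B. x \<in> ghosts U \<and> y \<in> ghosts U \<and> sle U x y) \<rparr>"

definition Uv :: "('r::comm_semiring_1 \<Rightarrow> 'm::{linorder, comm_monoid_mult, zero}) \<Rightarrow> ('r + 'm) set stm" where
  "Uv v = hat (U0 v)"

definition phiv :: "('r::comm_semiring_1 \<Rightarrow> 'm::{linorder, comm_monoid_mult, zero}) \<Rightarrow> 'r \<Rightarrow> ('r + 'm) set" where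
  "phiv v a = sigma (U0 v) (phi0 v a)"

definition iotav :: "('r::comm_semiring_1 \<Rightarrow> 'm::{linorder, comm_monoid_mult, zero}) \<Rightarrow> 'm \<Rightarrow> ('r + 'm) set" where
  "iotav v m = sigma (U0 v) (Inr m)"

end

theory Submission imports Defs begin

text \<open>
  Let \<open>gh : U\<^sup>0(v) \<rightarrow> M\<close> be the ghost part \<open>x \<mapsto> ex\<close>.  Multiplication in \<open>U\<^sup>0(v)\<close> is
  associative, but the supertropical addition is distributive only up to \<open>E\<close>: \<open>x(y + z)\<close>
  and \<open>xy + xz\<close> can differ only when \<open>gh y < gh z\<close> but \<open>gh x gh y = gh x gh z\<close>, and
  then \<open>xz \<in> D(U\<^sup>0(v))\<close>, so both sides collapse to the ghost \<open>gh x gh z\<close> in \<open>U(v)\<close>.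

  Given a cover \<open>\<psi> : R \<rightarrow> V\<close>, sending a tangible \<open>a\<close> to \<open>\<psi> a\<close> and a ghost \<open>m\<close> to \<open>m\<close>
  is multiplicative and additive on \<open>U\<^sup>0(v)\<close>.  It is constant on \<open>E\<close>-classes because
  every tangible element of \<open>D(U\<^sup>0(v))\<close> is a product \<open>ab\<close> with \<open>n < v a\<close> and
  \<open>n v(b) = v(a) v(b)\<close> for some \<open>n\<close>; distributivity in \<open>V\<close> then gives
  \<open>\<psi>(ab) = \<psi> b (n + \<psi> a) = n v(b) + \<psi>(ab)\<close>, a ghost.  Uniqueness holds because \<open>U(v)\<close>
  is generated by \<open>\<phi>\<^sub>v(R)\<close> and the ghosts.
\<close>

locale bipotent_m_valuation =
  fixes v :: "'r::comm_semiring_1 \<Rightarrow> 'm::{linorder, comm_monoid_mult, zero}"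
  assumes bipotent: "bipotent_semiring TYPE('m)"
    and m_val: "m_valuation v"
begin

lemma M_zero_mult [simp]: "0 * (x::'m) = 0"
  using bipotent unfolding bipotent_semiring_def by auto

lemma M_mult_zero [simp]: "(x::'m) * 0 = 0"
  by (metis M_zero_mult mult.commute)

lemma M_zero_le [simp]: "0 \<le> (x::'m)"
  using bipotent unfolding bipotent_semiring_def by auto

lemma M_mult_left_mono: "(x::'m) \<le> y \<Longrightarrow> z * x \<le> z * y"
  using bipotent unfolding bipotent_semiring_def by (metis mult.commute)

lemma M_mult_right_mono: "(x::'m) \<le> y \<Longrightarrow> x * z \<le> y * z"
  using bipotent unfolding bipotent_semiring_def by auto

lemma v_zero [simp]: "v 0 = 0"
  and v_one [simp]: "v 1 = 1"
  and v_mult [simp]: "v (a * b) = v a * v b"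
  and v_add_le: "v (a + b) \<le> max (v a) (v b)"
  using m_val unfolding m_valuation_def by auto

subsection \<open>The supertropical monoid \<open>U\<^sup>0(v)\<close>\<close>

definition C :: "('r + 'm) set" where
  "C = carr (U0 v)"

definition gh :: "'r + 'm \<Rightarrow> 'm" where
  "gh x = (case x of Inl a \<Rightarrow> v a | Inr m \<Rightarrow> m)"

text \<open>\<open>add0\<close> is \<open>sadd (U0 v)\<close> written out in terms of \<open>gh\<close>.\<close>

definition add0 :: "'r + 'm \<Rightarrow> 'r + 'm \<Rightarrow> 'r + 'm" where
  "add0 x y = (if gh x = gh y then Inr (gh x) else if gh x \<le> gh y then y else x)"

lemma gh_simps [simp]: "gh (Inl a) = v a" "gh (Inr m) = m"
  by (simp_all add: gh_def)

lemma C_simps [simp]: "Inl a \<in> C \<longleftrightarrow> v a \<noteq> 0" "Inr m \<in> C"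
  by (auto simp: C_def U0_def supp_def)

lemma U0_simps [simp]:
  "carr (U0 v) = C" "smul (U0 v) = u0mul v" "sone (U0 v) = phi0 v 1"
  "szero (U0 v) = Inr 0" "sghost (U0 v) = Inr 1" "sle (U0 v) = u0le"
  by (simp_all add: C_def U0_def)

lemma u0mul_simps [simp]:
  "u0mul v (Inl a) (Inl b) = (if v a * v b = 0 then Inr 0 else Inl (a * b))"
  "u0mul v (Inl a) (Inr n) = Inr (v a * n)"
  "u0mul v (Inr m) (Inl b) = Inr (m * v b)"
  "u0mul v (Inr m) (Inr n) = Inr (m * n)"
  by (simp_all add: u0mul_def supp_def)

lemma u0le_simps [simp]:
  "u0le (Inr m) (Inr n) \<longleftrightarrow> m \<le> n" "\<not> u0le (Inl a) y" "\<not> u0le x (Inl b)"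
  by (auto simp: u0le_def split: sum.splits)

lemma gh_u0mul [simp]: "gh (u0mul v x y) = gh x * gh y"
  by (cases x; cases y) auto

lemma u0mul_Inr [simp]: "u0mul v (Inr m) x = Inr (m * gh x)" "u0mul v x (Inr m) = Inr (gh x * m)"
  by (cases x; simp)+

lemma u0mul_commute: "u0mul v x y = u0mul v y x"
  by (cases x; cases y) (auto simp: mult.commute)

lemma u0mul_assoc: "u0mul v (u0mul v x y) z = u0mul v x (u0mul v y z)"
  by (cases x; cases y; cases z) (auto simp: mult.assoc, (metis M_zero_mult mult.assoc)+)

lemma u0mul_closed: "x \<in> C \<Longrightarrow> y \<in> C \<Longrightarrow> u0mul v x y \<in> C"
  by (cases x; cases y) auto

lemma gh_eq_zero: "x \<in> C \<Longrightarrow> gh x = 0 \<Longrightarrow> x = Inr 0"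
  by (cases x) auto

lemma phi0_in_C: "phi0 v a \<in> C"
  by (simp add: phi0_def supp_def)

lemma gh_phi0 [simp]: "gh (phi0 v a) = v a"
  by (simp add: phi0_def supp_def)

lemma phi0_mult: "phi0 v (a * b) = u0mul v (phi0 v a) (phi0 v b)"
  by (simp add: phi0_def supp_def)

lemma u0mul_phi0_one: "x \<in> C \<Longrightarrow> u0mul v (phi0 v 1) x = x"
proof (cases "(1::'m) = 0")
  case True
  then have "m = 0" for m :: 'm
    by (metis M_mult_zero mult_1_right)
  then show "x \<in> C \<Longrightarrow> ?thesis"
    by (cases x) (auto simp: phi0_def supp_def)
next
  case False
  then show "x \<in> C \<Longrightarrow> ?thesis"
    by (cases x) (auto simp: phi0_def supp_def)
qed

lemma ghosts_U0: "ghosts (U0 v) = range Inr"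
  unfolding ghosts_def by (auto simp: image_def) (metis C_simps(2) gh_simps(2))

lemma add0_closed: "x \<in> C \<Longrightarrow> y \<in> C \<Longrightarrow> add0 x y \<in> C"
  by (simp add: add0_def)

lemma add0_commute: "add0 x y = add0 y x"
  by (auto simp: add0_def)

lemma add0_assoc: "add0 (add0 x y) z = add0 x (add0 y z)"
  by (auto simp: add0_def)

subsection \<open>The set \<open>D(U\<^sup>0(v))\<close> and the equivalence \<open>E\<close>\<close>

definition D :: "('r + 'm) set" where
  "D = Dset (U0 v)"

lemma D_iff: "x \<in> D \<longleftrightarrow> (\<exists>m. x = Inr m) \<or>
   (\<exists>y z n. y \<in> C \<and> z \<in> C \<and> n < gh y \<and> n * gh z = gh y * gh z \<and> x = u0mul v y z)"
  unfolding D_def Dset_def ghosts_U0 by (auto simp: order.strict_iff_order)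

lemma Inr_in_D [simp]: "Inr m \<in> D"
  by (simp add: D_iff)

lemma u0mul_in_D: "z \<in> C \<Longrightarrow> x \<in> C \<Longrightarrow> n < gh z \<Longrightarrow> n * gh x = gh z * gh x \<Longrightarrow> u0mul v z x \<in> D"
  unfolding D_iff by blast

lemma D_ideal:
  assumes "x \<in> D" "w \<in> C"
  shows "u0mul v x w \<in> D"
proof (cases "\<exists>m. x = Inr m")
  case True
  then show ?thesis by auto
next
  case False
  then obtain y z n where yz: "y \<in> C" "z \<in> C" "n < gh y" "n * gh z = gh y * gh z"
    and x: "x = u0mul v y z"
    using assms(1) unfolding D_iff by blast
  have "u0mul v x w = u0mul v y (u0mul v z w)"
    using x by (simp add: u0mul_assoc)
  moreover have "n * gh (u0mul v z w) = gh y * gh (u0mul v z w)"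
    using yz by (simp add: mult.assoc[symmetric])
  ultimately show ?thesis
    using yz assms(2) u0mul_closed u0mul_in_D by metis
qed

lemma Inl_in_DE:
  assumes "Inl c \<in> D"
  obtains a b n where "c = a * b" "n < v a" "n * v b = v a * v b"
proof -
  from assms obtain y z n where yz: "y \<in> C" "z \<in> C" "n < gh y" "n * gh z = gh y * gh z"
    and c: "Inl c = u0mul v y z"
    unfolding D_iff by blast
  then obtain a b where "y = Inl a" "z = Inl b"
    by (cases y; cases z) auto
  with yz c show ?thesis
    using that by (auto split: if_splits)
qed

definition canon :: "'r + 'm \<Rightarrow> 'r + 'm" where
  "canon x = (if x \<in> D then Inr (gh x) else x)"

lemma canon_Inr [simp]: "canon (Inr m) = Inr m"
  by (simp add: canon_def)

lemma canon_eq_iff: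
  "x \<in> C \<Longrightarrow> y \<in> C \<Longrightarrow> canon x = canon y \<longleftrightarrow> x = y \<or> (x \<in> D \<and> y \<in> D \<and> gh x = gh y)"
  by (auto simp: canon_def)

lemma Erel_U0_iff: "(x, y) \<in> Erel (U0 v) \<longleftrightarrow> x \<in> C \<and> y \<in> C \<and> canon x = canon y"
  unfolding Erel_def by (auto simp: canon_eq_iff D_def[symmetric])

abbreviation cls :: "'r + 'm \<Rightarrow> ('r + 'm) set" where
  "cls \<equiv> sigma (U0 v)"

lemma cls_eq: "x \<in> C \<Longrightarrow> cls x = {y \<in> C. canon y = canon x}"
  unfolding sigma_def by (auto simp: Erel_U0_iff)

lemma cls_self: "x \<in> C \<Longrightarrow> x \<in> cls x"
  by (simp add: cls_eq)

lemma cls_eq_iff: "x \<in> C \<Longrightarrow> y \<in> C \<Longrightarrow> cls x = cls y \<longleftrightarrow> canon x = canon y"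
  by (auto simp: cls_eq)

lemma cls_Inr [simp]: "cls (Inr m) = iotav v m"
  by (simp add: iotav_def)

lemma canon_u0mul_cong_left:
  assumes "x \<in> C" "x' \<in> C" "y \<in> C" "canon x = canon x'"
  shows "canon (u0mul v x y) = canon (u0mul v x' y)"
proof -
  have "x = x' \<or> (x \<in> D \<and> x' \<in> D \<and> gh x = gh x')"
    using assms by (simp add: canon_eq_iff)
  then show ?thesis
    using D_ideal assms(3) by (auto simp: canon_def)
qed

lemma canon_u0mul_cong:
  assumes "x \<in> C" "x' \<in> C" "y \<in> C" "y' \<in> C" "canon x = canon x'" "canon y = canon y'"
  shows "canon (u0mul v x y) = canon (u0mul v x' y')"
proof -
  have "canon (u0mul v x y) = canon (u0mul v y x')"
    using canon_u0mul_cong_left assms by (metis u0mul_commute)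
  also have "\<dots> = canon (u0mul v x' y')"
    using canon_u0mul_cong_left assms by (metis u0mul_commute)
  finally show ?thesis .
qed

lemma canon_distrib_less:
  assumes "x \<in> C" "z \<in> C" "gh y < gh z"
  shows "canon (u0mul v x (add0 y z)) = canon (add0 (u0mul v x y) (u0mul v x z))"
proof (cases "gh x * gh y = gh x * gh z")
  case True
  then have "u0mul v z x \<in> D"
    using u0mul_in_D[OF assms(2,1,3)] by (simp add: mult.commute)
  then have "canon (u0mul v x z) = Inr (gh x * gh z)"
    by (simp add: canon_def u0mul_commute)
  then show ?thesis
    using True assms(3) by (auto simp: add0_def)
next
  case False
  moreover have "gh x * gh y \<le> gh x * gh z"
    using assms(3) by (simp add: M_mult_left_mono)
  ultimately show ?thesis
    using assms(3) by (auto simp: add0_def)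
qed

lemma canon_distrib:
  assumes "x \<in> C" "y \<in> C" "z \<in> C"
  shows "canon (u0mul v x (add0 y z)) = canon (add0 (u0mul v x y) (u0mul v x z))"
proof -
  consider "gh y = gh z" | "gh y < gh z" | "gh z < gh y"
    by fastforce
  then show ?thesis
  proof cases
    case 1
    then show ?thesis by (simp add: add0_def)
  next
    case 2
    then show ?thesis using canon_distrib_less assms by blast
  next
    case 3
    then show ?thesis using canon_distrib_less[of x y z] assms by (simp add: add0_commute)
  qed
qed

subsection \<open>The supertropical semiring \<open>U(v)\<close>\<close>

lemma carr_Uv: "carr (Uv v) = cls ` C"
  unfolding Uv_def hat_def quotient_def sigma_def by simp blast

lemma Uv_simps [simp]:
  "sghost (Uv v) = iotav v 1" "szero (Uv v) = iotav v 0" "sone (Uv v) = cls (phi0 v 1)"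
  by (simp_all add: Uv_def hat_def iotav_def del: cls_Inr)

lemma smul_Uv:
  assumes "x \<in> C" "y \<in> C"
  shows "smul (Uv v) (cls x) (cls y) = cls (u0mul v x y)"
proof -
  let ?S = "{u0mul v x' y' |x' y'. x' \<in> cls x \<and> y' \<in> cls y}"
  have xy: "u0mul v x y \<in> ?S" "u0mul v x y \<in> C"
    using assms cls_self u0mul_closed by blast+
  have S: "s \<in> C \<and> canon s = canon (u0mul v x y)" if "s \<in> ?S" for s
  proof -
    obtain x' y' where "s = u0mul v x' y'" "x' \<in> cls x" "y' \<in> cls y"
      using \<open>s \<in> ?S\<close> by blast
    then show ?thesis
      using assms u0mul_closed canon_u0mul_cong[of x' x y' y] by (auto simp: cls_eq)
  qed
  have "Erel (U0 v) `` ?S = cls (u0mul v x y)"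
  proof (intro equalityI subsetI)
    fix w assume "w \<in> Erel (U0 v) `` ?S"
    then obtain s where "s \<in> ?S" "(s, w) \<in> Erel (U0 v)"
      by blast
    then show "w \<in> cls (u0mul v x y)"
      using S[of s] xy(2) by (simp add: Erel_U0_iff cls_eq)
  next
    fix w assume "w \<in> cls (u0mul v x y)"
    then show "w \<in> Erel (U0 v) `` ?S"
      using xy(1) unfolding sigma_def by blast
  qed
  then show ?thesis
    by (simp add: Uv_def hat_def)
qed

lemma smul_iotav_Uv: "x \<in> C \<Longrightarrow> smul (Uv v) (iotav v m) (cls x) = iotav v (m * gh x)"
  using smul_Uv[of "Inr m"] by simp

lemma ghost_smul_Uv: "x \<in> C \<Longrightarrow> smul (Uv v) (iotav v 1) (cls x) = iotav v (gh x)"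
  by (simp add: smul_iotav_Uv)

lemma iotav_mult: "smul (Uv v) (iotav v m) (iotav v n) = iotav v (m * n)"
  using smul_Uv[of "Inr m" "Inr n"] by simp

lemma iotav_inject [simp]: "iotav v m = iotav v n \<longleftrightarrow> m = n"
  using cls_eq_iff[of "Inr m" "Inr n"] by simp

lemma ghosts_Uv: "ghosts (Uv v) = range (iotav v)"
proof
  show "ghosts (Uv v) \<subseteq> range (iotav v)"
    unfolding ghosts_def carr_Uv Uv_simps using ghost_smul_Uv by blast
  show "range (iotav v) \<subseteq> ghosts (Uv v)"
  proof
    fix X assume "X \<in> range (iotav v)"
    then obtain m where "X = smul (Uv v) (iotav v 1) (cls (Inr m))"
      using ghost_smul_Uv[of "Inr _"] by fastforce
    then show "X \<in> ghosts (Uv v)"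
      unfolding ghosts_def carr_Uv Uv_simps using C_simps(2) by blast
  qed
qed

lemma sle_iotav: "sle (Uv v) (iotav v m) (iotav v n) \<longleftrightarrow> m \<le> n"
proof -
  have mem: "Inr k \<in> iotav v m \<longleftrightarrow> k = m" for k m
    using cls_eq[of "Inr m"] by simp
  have "sle (Uv v) (iotav v m) (iotav v n) \<longleftrightarrow>
      (\<exists>x\<in>iotav v m. \<exists>y\<in>iotav v n. x \<in> range Inr \<and> y \<in> range Inr \<and> u0le x y)"
    by (simp add: Uv_def hat_def ghosts_U0)
  also have "\<dots> \<longleftrightarrow> m \<le> n"
  proof
    assume "m \<le> n"
    then show "\<exists>x\<in>iotav v m. \<exists>y\<in>iotav v n. x \<in> range Inr \<and> y \<in> range Inr \<and> u0le x y"
      using mem by (metis rangeI u0le_simps(1))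
  qed (auto simp: mem)
  finally show ?thesis .
qed

lemma sadd_Uv:
  "x \<in> C \<Longrightarrow> y \<in> C \<Longrightarrow> sadd (Uv v) (cls x) (cls y) = cls (add0 x y)"
  by (simp add: sadd_def Let_def ghost_smul_Uv sle_iotav add0_def)

lemma iotav_in_carr: "iotav v m \<in> cls ` C"
  by (metis C_simps(2) cls_Inr image_eqI)

lemma Uv_supertropical_monoid: "supertropical_monoid (Uv v)"
  unfolding supertropical_monoid_def ghosts_Uv carr_Uv Ball_image_comp comp_def Uv_simps
proof (intro conjI ballI impI)
  fix y assume "y \<in> C" "smul (Uv v) (iotav v 1) (cls y) = iotav v 0"
  then have "gh y = 0"
    by (simp add: ghost_smul_Uv)
  with \<open>y \<in> C\<close> show "cls y = iotav v 0"
    using gh_eq_zero by (metis cls_Inr)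
qed (auto simp: phi0_in_C smul_Uv u0mul_closed u0mul_assoc u0mul_phi0_one sle_iotav iotav_mult
    M_mult_right_mono iotav_in_carr smul_iotav_Uv, (metis u0mul_commute)+)

lemma Uv_supertropical_semiring: "supertropical_semiring (Uv v)"
  unfolding supertropical_semiring_def carr_Uv Ball_image_comp comp_def
  by (simp add: Uv_supertropical_monoid sadd_Uv add0_closed add0_assoc smul_Uv u0mul_closed
      cls_eq_iff canon_distrib)

lemma phiv_covers: "covers (Uv v) (iotav v) (phiv v) v"
proof -
  have ghost_phiv: "smul (Uv v) (iotav v 1) (phiv v a) = iotav v (v a)" for a
    unfolding phiv_def using phi0_in_C by (simp add: ghost_smul_Uv)
  have smax_iotav: "smax (Uv v) (iotav v m) (iotav v n) = iotav v (max m n)" for m n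
    by (simp add: smax_def sle_iotav max_def)
  have "ghost_ident (Uv v) (iotav v)"
    unfolding ghost_ident_def ghosts_Uv
    by (auto simp: bij_betw_def inj_on_def iotav_mult sle_iotav)
  moreover have "m_supervaluation (Uv v) (phiv v)"
    unfolding m_supervaluation_def Uv_simps ghost_phiv smax_iotav sle_iotav
    by (simp add: phiv_def carr_Uv phi0_in_C smul_Uv phi0_mult v_add_le)
      (simp add: phi0_def supp_def)
  ultimately show ?thesis
    unfolding covers_def supervaluation_def
    by (simp add: Uv_supertropical_semiring ghost_phiv)
qed

end

subsection \<open>The universal property\<close>

locale cover_of_m_valuation = bipotent_m_valuation v
  for v :: "'r::comm_semiring_1 \<Rightarrow> 'm::{linorder, comm_monoid_mult, zero}" +
  fixes V :: "'u stm" and \<iota> :: "'m \<Rightarrow> 'u" and \<psi> :: "'r \<Rightarrow> 'u"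
  assumes covers: "covers V \<iota> \<psi> v"
begin

abbreviation e :: 'u where "e \<equiv> sghost V"
abbreviation mul :: "'u \<Rightarrow> 'u \<Rightarrow> 'u" where "mul \<equiv> smul V"

lemma V_monoid: "supertropical_monoid V"
  and V_semiring: "supertropical_semiring V"
  and ghost_ident: "ghost_ident V \<iota>"
  and m_supervaluation: "m_supervaluation V \<psi>"
  using covers by (simp_all add: covers_def supervaluation_def supertropical_semiring_def)

lemma mul_closed: "x \<in> carr V \<Longrightarrow> y \<in> carr V \<Longrightarrow> mul x y \<in> carr V"
  using V_monoid by (simp add: supertropical_monoid_def)

lemma mul_commute: "x \<in> carr V \<Longrightarrow> y \<in> carr V \<Longrightarrow> mul x y = mul y x"
  using V_monoid by (simp add: supertropical_monoid_def)

lemma mul_assoc: "x \<in> carr V \<Longrightarrow> y \<in> carr V \<Longrightarrow> z \<in> carr V \<Longrightarrow> mul (mul x y) z = mul x (mul y z)"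
  using V_monoid unfolding supertropical_monoid_def by blast

lemma e_closed: "e \<in> carr V"
  using V_monoid by (simp add: supertropical_monoid_def)

lemma e_mul_eq_zero: "x \<in> carr V \<Longrightarrow> mul e x = szero V \<Longrightarrow> x = szero V"
  using V_monoid by (simp add: supertropical_monoid_def)

lemma distrib_left: "x \<in> carr V \<Longrightarrow> y \<in> carr V \<Longrightarrow> z \<in> carr V \<Longrightarrow>
    mul x (sadd V y z) = sadd V (mul x y) (mul x z)"
  using V_semiring by (simp add: supertropical_semiring_def)

lemma \<iota>_closed: "\<iota> m \<in> carr V"
proof -
  have "\<iota> m \<in> ghosts V"
    using ghost_ident by (auto simp: ghost_ident_def bij_betw_def)
  then show ?thesis
    unfolding ghosts_def using e_closed mul_closed by auto
qed

lemma \<iota>_inject [simp]: "\<iota> m = \<iota> n \<longleftrightarrow> m = n"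
  and \<iota>_mult: "\<iota> (m * n) = mul (\<iota> m) (\<iota> n)"
  and \<iota>_le_iff: "sle V (\<iota> m) (\<iota> n) \<longleftrightarrow> m \<le> n"
  and \<iota>_one: "\<iota> 1 = e"
  and \<iota>_zero: "\<iota> 0 = szero V"
  using ghost_ident by (auto simp: ghost_ident_def bij_betw_def inj_on_def)

lemma e_mul_\<iota>: "mul e (\<iota> m) = \<iota> m"
  using \<iota>_mult[of 1 m] \<iota>_one by simp

lemma \<psi>_closed: "\<psi> a \<in> carr V"
  and \<psi>_mult: "\<psi> (a * b) = mul (\<psi> a) (\<psi> b)"
  and \<psi>_one: "\<psi> 1 = sone V"
  using m_supervaluation by (simp_all add: m_supervaluation_def)

lemma e_mul_\<psi>: "mul e (\<psi> a) = \<iota> (v a)"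
  using covers by (simp add: covers_def)

lemma \<psi>_mul_\<iota>: "mul (\<psi> a) (\<iota> n) = \<iota> (v a * n)"
proof -
  have "mul (\<psi> a) (\<iota> n) = mul (mul e (\<psi> a)) (\<iota> n)"
    using mul_assoc[OF \<psi>_closed e_closed \<iota>_closed] mul_commute[OF \<psi>_closed e_closed]
    by (simp add: e_mul_\<iota>)
  then show ?thesis
    by (simp add: e_mul_\<psi> \<iota>_mult)
qed

lemma \<psi>_eq_zero: "v a = 0 \<Longrightarrow> \<psi> a = szero V"
  using e_mul_eq_zero[OF \<psi>_closed] e_mul_\<psi> \<iota>_zero by metis

lemma \<psi>_mult_ghost:
  assumes "n < v a" "n * v b = v a * v b"
  shows "\<psi> (a * b) = \<iota> (v (a * b))"
proof -
  have absorb: "sadd V (\<iota> n) (\<psi> a) = \<psi> a"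
    using assms(1) by (simp add: sadd_def Let_def e_mul_\<iota> e_mul_\<psi> \<iota>_le_iff order.strict_iff_order)
  have "\<psi> (a * b) = mul (\<psi> b) (sadd V (\<iota> n) (\<psi> a))"
    by (simp add: absorb \<psi>_mult mul_commute \<psi>_closed)
  also have "\<dots> = sadd V (\<iota> (v b * n)) (\<psi> (b * a))"
    by (simp add: distrib_left \<psi>_closed \<iota>_closed \<psi>_mul_\<iota> \<psi>_mult)
  also have "\<dots> = \<iota> (v (a * b))"
    using assms(2) by (simp add: sadd_def Let_def e_mul_\<iota> e_mul_\<psi> mult.commute)
  finally show ?thesis .
qed

definition lift :: "'r + 'm \<Rightarrow> 'u" where
  "lift x = (case x of Inl a \<Rightarrow> \<psi> a | Inr m \<Rightarrow> \<iota> m)"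

lemma lift_simps [simp]: "lift (Inl a) = \<psi> a" "lift (Inr m) = \<iota> m"
  by (simp_all add: lift_def)

lemma lift_closed: "lift x \<in> carr V"
  by (cases x) (simp_all add: \<psi>_closed \<iota>_closed)

lemma lift_canon: "lift (canon x) = lift x"
proof (cases "x \<in> D")
  case True
  show ?thesis
  proof (cases x)
    case (Inl c)
    with True obtain a b n where "c = a * b" "n < v a" "n * v b = v a * v b"
      using Inl_in_DE by blast
    with True Inl show ?thesis
      by (simp add: canon_def \<psi>_mult_ghost)
  qed simp
qed (simp add: canon_def)

lemma lift_u0mul: "lift (u0mul v x y) = mul (lift x) (lift y)"
  by (cases x; cases y)
    (auto simp: \<iota>_zero \<psi>_eq_zero \<psi>_mul_\<iota> \<iota>_mult mul_commute[OF \<iota>_closed \<psi>_closed] mult.commute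
      simp flip: \<psi>_mult)

lemma e_mul_lift: "mul e (lift x) = \<iota> (gh x)"
  by (cases x) (simp_all add: e_mul_\<psi> e_mul_\<iota>)

lemma lift_add0: "lift (add0 x y) = sadd V (lift x) (lift y)"
  by (auto simp: add0_def sadd_def Let_def e_mul_lift \<iota>_le_iff)

lemma lift_phi0: "lift (phi0 v a) = \<psi> a"
  by (simp add: phi0_def supp_def \<psi>_eq_zero \<iota>_zero)

definition induced_hom :: "('r + 'm) set \<Rightarrow> 'u" where
  "induced_hom X = lift (SOME x. x \<in> X)"

lemma induced_hom_cls:
  assumes "x \<in> C"
  shows "induced_hom (cls x) = lift x"
proof -
  define y where "y = (SOME y. y \<in> cls x)"
  have "y \<in> cls x"
    unfolding y_def using cls_self[OF assms] by (rule someI)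
  then have "canon y = canon x"
    using cls_eq[OF assms] by blast
  then have "lift y = lift x"
    using lift_canon by metis
  then show ?thesis
    by (simp add: induced_hom_def y_def)
qed

lemma induced_hom_iotav: "induced_hom (iotav v m) = \<iota> m"
  using induced_hom_cls[of "Inr m"] by simp

lemma induced_hom_semiring_hom: "semiring_hom (Uv v) V induced_hom"
  unfolding semiring_hom_def carr_Uv Ball_image_comp comp_def
  by (simp add: induced_hom_cls lift_closed smul_Uv u0mul_closed lift_u0mul sadd_Uv add0_closed
      lift_add0 phi0_in_C lift_phi0 \<psi>_one induced_hom_iotav \<iota>_zero)

lemma induced_hom_over_M: "over_M (iotav v) \<iota> induced_hom"
  by (simp add: over_M_def induced_hom_iotav)

lemma induced_hom_phiv: "\<psi> a = induced_hom (phiv v a)"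
  by (simp add: phiv_def induced_hom_cls phi0_in_C lift_phi0)

lemma induced_hom_unique:
  assumes "over_M (iotav v) \<iota> \<beta>" "\<forall>a. \<psi> a = \<beta> (phiv v a)"
  shows "\<forall>X\<in>carr (Uv v). \<beta> X = induced_hom X"
  unfolding carr_Uv Ball_image_comp comp_def
proof
  fix x assume "x \<in> C"
  then show "\<beta> (cls x) = induced_hom (cls x)"
  proof (cases x)
    case (Inl a)
    with \<open>x \<in> C\<close> have "cls x = phiv v a"
      by (simp add: phiv_def phi0_def supp_def)
    then show ?thesis
      using assms(2) induced_hom_phiv by metis
  next
    case (Inr m)
    then show ?thesis
      using assms(1) by (simp add: over_M_def induced_hom_iotav)
  qed
qed

end

theorem theorem6p9:
  fixes v :: "'r::comm_semiring_1 \<Rightarrow> 'm::{linorder, comm_monoid_mult, zero}"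
  assumes "bipotent_semiring TYPE('m)"
    and "m_valuation v"
    and "surj v"
  shows "covers (Uv v) (iotav v) (phiv v) v \<and>
    (\<forall>(V :: 'u stm) \<iota>V \<psi>. covers V \<iota>V \<psi> v \<longrightarrow>
       (\<exists>\<alpha>. semiring_hom (Uv v) V \<alpha> \<and> over_M (iotav v) \<iota>V \<alpha> \<and> (\<forall>a. \<psi> a = \<alpha> (phiv v a)) \<and>
          (\<forall>\<beta>. semiring_hom (Uv v) V \<beta> \<and> over_M (iotav v) \<iota>V \<beta> \<and> (\<forall>a. \<psi> a = \<beta> (phiv v a))
                \<longrightarrow> (\<forall>x\<in>carr (Uv v). \<beta> x = \<alpha> x))))"
proof -
  interpret bipotent_m_valuation v
    using assms by unfold_locales
  show ?thesis
    apply (intro conjI allI impI phiv_covers)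
    subgoal premises cover for V \<iota>V \<psi>
    proof -
      interpret cover_of_m_valuation v V \<iota>V \<psi>
        using assms cover by unfold_locales
      show ?thesis
        using induced_hom_semiring_hom induced_hom_over_M induced_hom_phiv induced_hom_unique
        by blast
    qed
    done
qed

end
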